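(* Let $a,b>0$, $\delta>0$, $\theta\in[0,1]$, $\mathcal{X}=\{x\in\mathbb{R}^d:\|x\|_\infty\le b\}$, and for $i\in[d]$, $x\in\mathcal{X}$ let $f_i^+(x)=\theta b|x(i)+b|+\frac{1-\theta}4(x(i)+b)^2$ and $f_i^-(x)=\theta b|x(i)-b|+\frac{1-\theta}4(x(i)-b)^2$. For $v\in\{-1,1\}^d$ let \[ g_v(x)=a\sum_{i=1}^d\Big(\frac{1+2\delta v(i)}2f_i^+(x)+\frac{1-2\delta v(i)}2f_i^-(x)\Big), \] and $\mathcal{G}_{\mathtt{sc}}=\{g_v:v\in\{-1,1\}^d\}$, decomposed coordinatewise as $g_v(x)=\sum_ig_{i,v(i)}(x(i))$ with, for $\nu\in\{-1,1\}$ and $y\in\mathcal{X}_i=[-b,b]$, $g_{i,\nu}(y)=a\big(\frac{1+2\delta\nu}2(\theta b|y+b|+\frac{1-\theta}4(y+b)^2)+\frac{1-2\delta\nu}2(\theta b|y-b|+\frac{1-\theta}4(y-b)^2)\big)$. If $\frac{1-\theta}{1+\theta}\ge2\delta$, then \[ \psi(\mathcal{G}_{\mathtt{sc}})\ \ge\ \frac{2ab^2\delta^2}{1-\theta}. \]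
   Context: For such a decomposable family, $\psi_i(\mathcal{G})=\min_{y\in\mathcal{X}_i}\big(g_{i,1}(y)+g_{i,-1}(y)-(\min_{y'\in\mathcal{X}_i}g_{i,1}(y')+\min_{y'\in\mathcal{X}_i}g_{i,-1}(y'))\big)$ and $\psi(\mathcal{G})=\min_{i\in[d]}\psi_i(\mathcal{G})$. *)

theory Defs
  imports "HOL-Analysis.Analysis"
begin

text \<open>For coordinate i, g i nu y is g_{i,nu}(y) (nu in {-1,1}) and X i is the
  coordinate domain X_i.  Minima over X_i are written as infima (for the
  continuous functions on compact intervals used below they are attained).\<close>

definition psi_coord :: "(real \<Rightarrow> real \<Rightarrow> real) \<Rightarrow> real set \<Rightarrow> real" where
  "psi_coord g X =
     Inf ((\<lambda>y. g 1 y + g (-1) y - (Inf (g 1 ` X) + Inf (g (-1) ` X))) ` X)"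

definition psi :: "nat \<Rightarrow> (nat \<Rightarrow> real \<Rightarrow> real \<Rightarrow> real) \<Rightarrow> (nat \<Rightarrow> real set) \<Rightarrow> real" where
  "psi d g X = Min ((\<lambda>i. psi_coord (g i) (X i)) ` {1..d})"

definition g_sc :: "real \<Rightarrow> real \<Rightarrow> real \<Rightarrow> real \<Rightarrow> nat \<Rightarrow> real \<Rightarrow> real \<Rightarrow> real" where
  "g_sc a b \<delta> \<theta> i \<nu> y =
     a * ((1 + 2 * \<delta> * \<nu>) / 2 * (\<theta> * b * \<bar>y + b\<bar> + (1 - \<theta>) / 4 * (y + b)^2)
        + (1 - 2 * \<delta> * \<nu>) / 2 * (\<theta> * b * \<bar>y - b\<bar> + (1 - \<theta>) / 4 * (y - b)^2))"

end

theory Submission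
  imports Defs
begin

text \<open>On the box, g_{i,\<nu>} is the quadratic
  a ((1-\<theta>)/4 y^2 + \<delta>\<nu>b(1+\<theta>) y + (1+3\<theta>)/4 b^2), whose vertex
  -2\<delta>\<nu>b(1+\<theta>)/(1-\<theta>) lies in [-b,b] by the hypothesis on \<delta>.
  Hence both minima equal a((1+3\<theta>)/4 b^2 - \<delta>^2b^2(1+\<theta>)^2/(1-\<theta>)), and the linear
  terms cancel in g_{i,1} + g_{i,-1}, leaving
  a((1-\<theta>)/2 y^2 + 2\<delta>^2b^2(1+\<theta>)^2/(1-\<theta>)) \<ge> 2ab^2\<delta>^2/(1-\<theta>).\<close>

lemma psi_geI:
  assumes "d \<ge> 1" and "\<And>i. i \<in> {1..d} \<Longrightarrow> L \<le> psi_coord (g i) (X i)"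
  shows "L \<le> psi d g X"
  using assms unfolding psi_def by (subst Min_ge_iff) auto

lemma quadratic_ge_vertex_value:
  fixes p s c y :: real
  assumes "p > 0"
  shows "c - s^2 / (4 * p) \<le> p * y^2 + s * y + c"
proof -
  have "p * y^2 + s * y + c - (c - s^2 / (4 * p)) = p * (y + s / (2 * p))^2"
    using assms by (simp add: power2_eq_square field_simps)
  moreover have "0 \<le> p * (y + s / (2 * p))^2"
    using assms by simp
  ultimately show ?thesis by linarith
qed

lemma quadratic_at_vertex:
  fixes p s c :: real
  assumes "p \<noteq> 0"
  shows "p * (- s / (2 * p))^2 + s * (- s / (2 * p)) + c = c - s^2 / (4 * p)"
  using assms by (simp add: power2_eq_square field_simps)

lemma g_sc_on_box:
  assumes "y \<in> {-b..b}"
  shows "g_sc a b \<delta> \<theta> i \<nu> y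
           = a * ((1 - \<theta>) / 4 * y^2 + \<delta> * \<nu> * b * (1 + \<theta>) * y + (1 + 3 * \<theta>) / 4 * b^2)"
proof -
  have "\<bar>y + b\<bar> = y + b" "\<bar>y - b\<bar> = b - y"
    using assms by auto
  then show ?thesis
    unfolding g_sc_def by (simp add: power2_eq_square field_simps)
qed

lemma Inf_g_sc:
  assumes "0 \<le> a" and "0 < b" and "0 \<le> \<theta>" and "\<theta> < 1" and "0 \<le> \<delta>"
    and "2 * \<delta> * (1 + \<theta>) \<le> 1 - \<theta>" and "\<nu> = 1 \<or> \<nu> = -1"
  shows "Inf (g_sc a b \<delta> \<theta> i \<nu> ` {-b..b})
           = a * ((1 + 3 * \<theta>) / 4 * b^2 - \<delta>^2 * b^2 * (1 + \<theta>)^2 / (1 - \<theta>))"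
    (is "_ = ?m")
proof (rule cInf_eq_minimum)
  define p where "p = (1 - \<theta>) / 4"
  define s where "s = \<delta> * \<nu> * b * (1 + \<theta>)"
  define c where "c = (1 + 3 * \<theta>) / 4 * b^2"
  have p_pos: "p > 0"
    using assms(4) by (simp add: p_def)
  have g_eq: "g_sc a b \<delta> \<theta> i \<nu> y = a * (p * y^2 + s * y + c)" if "y \<in> {-b..b}" for y
    using g_sc_on_box[OF that] by (simp add: p_def s_def c_def)
  have "s^2 = \<delta>^2 * b^2 * (1 + \<theta>)^2"
    using assms(7) by (auto simp: s_def power_mult_distrib)
  moreover have "4 * p = 1 - \<theta>"
    by (simp add: p_def)
  ultimately have min_eq: "a * (c - s^2 / (4 * p)) = ?m"
    by (simp add: c_def)
  define r where "r = 2 * \<delta> * (1 + \<theta>) / (1 - \<theta>)"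
  have vertex: "- s / (2 * p) = - r * \<nu> * b"
    using assms(4) by (simp add: p_def s_def r_def field_simps)
  show "?m \<in> g_sc a b \<delta> \<theta> i \<nu> ` {-b..b}"
  proof
    have "r \<le> 1" "0 \<le> r"
      using assms(3-6) by (simp_all add: r_def)
    then have "r * b \<le> 1 * b" "0 \<le> r * b"
      using assms(2) by (simp_all add: mult_right_mono)
    then show "- s / (2 * p) \<in> {-b..b}"
      unfolding vertex using assms(7) by auto
    have "g_sc a b \<delta> \<theta> i \<nu> (- s / (2 * p)) = a * (c - s^2 / (4 * p))"
      using g_eq[OF \<open>- s / (2 * p) \<in> {-b..b}\<close>] quadratic_at_vertex[of p s c] p_pos
      by simp
    then show "?m = g_sc a b \<delta> \<theta> i \<nu> (- s / (2 * p))"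
      by (simp only: min_eq)
  qed
  show "?m \<le> x" if x_in: "x \<in> g_sc a b \<delta> \<theta> i \<nu> ` {-b..b}" for x
  proof -
    obtain y where y: "y \<in> {-b..b}" and x: "x = g_sc a b \<delta> \<theta> i \<nu> y"
      using x_in by blast
    have "a * (c - s^2 / (4 * p)) \<le> a * (p * y^2 + s * y + c)"
      using quadratic_ge_vertex_value[OF p_pos] assms(1) by (rule mult_left_mono)
    then show ?thesis
      unfolding x g_eq[OF y] min_eq .
  qed
qed

lemma psi_coord_g_sc_ge:
  assumes "0 \<le> a" and "0 < b" and "0 \<le> \<theta>" and "\<theta> < 1" and "0 \<le> \<delta>"
    and "2 * \<delta> * (1 + \<theta>) \<le> 1 - \<theta>"
  shows "2 * a * b^2 * \<delta>^2 / (1 - \<theta>) \<le> psi_coord (g_sc a b \<delta> \<theta> i) {-b..b}"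
proof -
  define m where "m = a * ((1 + 3 * \<theta>) / 4 * b^2 - \<delta>^2 * b^2 * (1 + \<theta>)^2 / (1 - \<theta>))"
  have Inf_eq: "Inf (g_sc a b \<delta> \<theta> i \<nu> ` {-b..b}) = m" if "\<nu> = 1 \<or> \<nu> = -1" for \<nu>
    unfolding m_def using Inf_g_sc[OF assms that] .
  have "2 * a * b^2 * \<delta>^2 / (1 - \<theta>) \<le> g_sc a b \<delta> \<theta> i 1 y + g_sc a b \<delta> \<theta> i (-1) y - (m + m)"
    if y: "y \<in> {-b..b}" for y
  proof -
    have "2 * \<delta>^2 * b^2 * 1 \<le> 2 * \<delta>^2 * b^2 * (1 + \<theta>)^2"
      using assms(3) by (intro mult_left_mono one_le_power) simp_all
    then have "2 * \<delta>^2 * b^2 / (1 - \<theta>) \<le> 2 * \<delta>^2 * b^2 * (1 + \<theta>)^2 / (1 - \<theta>)"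
      using assms(4) by (intro divide_right_mono) simp_all
    moreover have "0 \<le> (1 - \<theta>) / 2 * y^2"
      using assms(4) by simp
    ultimately have "a * (2 * b^2 * \<delta>^2 / (1 - \<theta>))
        \<le> a * ((1 - \<theta>) / 2 * y^2 + 2 * \<delta>^2 * b^2 * (1 + \<theta>)^2 / (1 - \<theta>))"
      using assms(1) by (intro mult_left_mono) (simp_all add: mult.commute mult.left_commute)
    moreover have "g_sc a b \<delta> \<theta> i 1 y + g_sc a b \<delta> \<theta> i (-1) y - (m + m)
        = a * ((1 - \<theta>) / 2 * y^2 + 2 * \<delta>^2 * b^2 * (1 + \<theta>)^2 / (1 - \<theta>))"
      unfolding g_sc_on_box[OF y] m_def by (simp add: algebra_simps) (simp add: field_simps)
    ultimately show ?thesis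
      by (simp add: ac_simps)
  qed
  then show ?thesis
    unfolding psi_coord_def Inf_eq[of 1, simplified] Inf_eq[of "-1", simplified]
    using assms(2) by (intro cINF_greatest) auto
qed

theorem lemma5:
  fixes a b \<delta> \<theta> :: real and d :: nat
  assumes "a > 0" and "b > 0" and "\<delta> > 0"
    and "0 \<le> \<theta>" and "\<theta> \<le> 1"
    and "d \<ge> 1"
    and "(1 - \<theta>) / (1 + \<theta>) \<ge> 2 * \<delta>"
  shows "psi d (g_sc a b \<delta> \<theta>) (\<lambda>i. {-b..b}) \<ge> 2 * a * b^2 * \<delta>^2 / (1 - \<theta>)"
proof (rule psi_geI[OF \<open>d \<ge> 1\<close>])
  have "\<theta> \<noteq> 1"
    using assms(3,7) by auto
  then have "\<theta> < 1"
    using assms(5) by simp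
  moreover have "2 * \<delta> * (1 + \<theta>) \<le> 1 - \<theta>"
    using assms(4,7) by (simp add: field_simps)
  ultimately show "2 * a * b^2 * \<delta>^2 / (1 - \<theta>) \<le> psi_coord (g_sc a b \<delta> \<theta> i) {-b..b}" for i
    using psi_coord_g_sc_ge assms(1-4) by simp
qed

end
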